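(* Let $\mathcal{X}=\{x\in\mathbb{R}^d:\|x\|\le1\}$, $\mathcal{F}=\{x\mapsto\langle\theta,x\rangle:\|\theta\|\le1\}$ and $\mathcal{F}^+=\{x\mapsto\langle\theta,x\rangle:\theta\in\mathbb{R}^d\}$. There exist absolute constants $c,C,d_0,\Delta_0>0$ such that: (i) for all $d\ge d_0$ and all $\Delta\in(0,\tfrac12]$, $\log N_{\mathsf{frac}}(\mathcal{F},\mathcal{F};\Delta)\ge c\,d$; (ii) for all $d\ge1$ and all $\Delta\in(0,\Delta_0]$, $\log N_{\mathsf{frac}}(\mathcal{F},\mathcal{F}^+;\Delta)\le\frac{C}{\Delta^2}\log\frac1\Delta$.
   Context: For function classes $\mathcal{F}\subseteq\mathcal{F}^+$ of real functions on $\mathcal{X}$, $N_{\mathsf{frac}}(\mathcal{F},\mathcal{F}^+;\Delta)=\inf_{p\in\Delta(\mathcal{F}^+)}\sup_{\mu\in\Delta(\mathcal{X}),f^\star\in\mathcal{F}}\frac1{p(\{f:\mathbb{E}_{x\sim\mu}|f(x)-f^\star(x)|\le\Delta\})}$. $\|\cdot\|$ is the Euclidean norm. *)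

theory Defs
  imports "HOL-Probability.Probability"
begin

text \<open>Vectors in R^d are represented as extensional functions on the index set {..<d}
  (the space of the product measure space below), so that the dimension d can be
  quantified inside the statement.\<close>

definition vecs :: "nat \<Rightarrow> (nat \<Rightarrow> real) measure" where
  "vecs d = PiM {..<d} (\<lambda>_. borel)"

definition inner_d :: "nat \<Rightarrow> (nat \<Rightarrow> real) \<Rightarrow> (nat \<Rightarrow> real) \<Rightarrow> real" where
  "inner_d d u v = (\<Sum>i<d. u i * v i)"

definition norm_d :: "nat \<Rightarrow> (nat \<Rightarrow> real) \<Rightarrow> real" where
  "norm_d d u = sqrt (\<Sum>i<d. (u i)^2)"

definition dists_X :: "nat \<Rightarrow> (nat \<Rightarrow> real) measure set" where
  "dists_X d = {\<mu>. prob_space \<mu> \<and> sets \<mu> = sets (vecs d) \<and>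
      emeasure \<mu> {x \<in> space (vecs d). norm_d d x \<le> 1} = 1}"

text \<open>Probability distributions over a class of linear functions x \<mapsto> <theta,x>,
  parametrized by theta, where the class is {theta. H theta}.\<close>
definition dists_class :: "nat \<Rightarrow> ((nat \<Rightarrow> real) \<Rightarrow> bool) \<Rightarrow> (nat \<Rightarrow> real) measure set" where
  "dists_class d H = {p. prob_space p \<and> sets p = sets (vecs d) \<and>
      emeasure p {\<theta> \<in> space (vecs d). H \<theta>} = 1}"

definition close_set :: "nat \<Rightarrow> (nat \<Rightarrow> real) measure \<Rightarrow> (nat \<Rightarrow> real) \<Rightarrow> real \<Rightarrow> (nat \<Rightarrow> real) set" where
  "close_set d \<mu> \<theta>s \<Delta> = {\<theta> \<in> space (vecs d).
      (\<integral>\<^sup>+ x. ennreal \<bar>inner_d d \<theta> x - inner_d d \<theta>s x\<bar> \<partial>\<mu>) \<le> ennreal \<Delta>}"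

text \<open>Fractional covering number N_frac(F, F^+; Delta), where F = {<theta,.> : G theta} and
  F^+ = {<theta,.> : H theta}. Value in ennreal; 1/0 = top.\<close>
definition N_frac :: "nat \<Rightarrow> ((nat \<Rightarrow> real) \<Rightarrow> bool) \<Rightarrow> ((nat \<Rightarrow> real) \<Rightarrow> bool) \<Rightarrow> real \<Rightarrow> ennreal" where
  "N_frac d G H \<Delta> = (INF p \<in> dists_class d H.
      SUP (\<mu>, \<theta>s) \<in> dists_X d \<times> {\<theta> \<in> space (vecs d). G \<theta>}.
        inverse (emeasure p (close_set d \<mu> \<theta>s \<Delta>)))"

definition unit_pred :: "nat \<Rightarrow> (nat \<Rightarrow> real) \<Rightarrow> bool" where
  "unit_pred d \<theta> \<longleftrightarrow> norm_d d \<theta> \<le> 1"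

end

theory Submission
  imports Defs
begin

(* Everything rests on the Rademacher sign vectors g in {1,-1}^d: averaged over all of them,
   g g^T is the identity, <g,u> has fourth moment O(|u|^4), and <g,u> is 1-subgaussian.

   Lower bound: by the subgaussian tail, any prior p on the unit ball gives the half-space
   {theta. <g,theta> >= sqrt d / 2} mass at most exp(-d/8) on average over g, hence for some g.
   The adversary puts mu at the unit vector g / sqrt d and takes f* = <g / sqrt d, .>; every
   Delta-close theta (Delta <= 1/2) lies in that half-space.

   Upper bound (Maurey's empirical method): since the average of <g,theta*> g is theta*, the
   empirical mean (1/k) sum_j <g_j,theta*> g_j over k ~ 1/Delta^2 independent sign vectors is
   L1(mu)-close to theta* for a quarter of all tuples (g_1, ..., g_k), by second moments and
   Markov's inequality.  Rounding the coefficients to the grid (Delta/8) Z adds an error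
   (Delta/8) |<g_j,x>| per term, which is Delta/8 on average as well.  Hence the uniform prior
   on codes (sign tuple, bounded integer coefficients) charges the Delta-ball around theta*
   with mass at least 1 / (4 (2N+1)^k), where N ~ sqrt k / Delta. *)

definition lists_len :: "nat \<Rightarrow> 'a set \<Rightarrow> 'a list set" where
  "lists_len n A = {xs. set xs \<subseteq> A \<and> length xs = n}"

lemma finite_lists_len: "finite A \<Longrightarrow> finite (lists_len n A)"
  unfolding lists_len_def by (rule finite_lists_length_eq)

lemma card_lists_len: "finite A \<Longrightarrow> card (lists_len n A) = card A ^ n"
  unfolding lists_len_def by (rule card_lists_length_eq)

lemma lists_len_0 [simp]: "lists_len 0 A = {[]}"
  unfolding lists_len_def by auto

lemma sum_lists_len_Suc:
  assumes "finite A"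
  shows "sum F (lists_len (Suc n) A) = (\<Sum>a\<in>A. \<Sum>xs\<in>lists_len n A. F (a # xs))"
proof -
  have eq: "lists_len (Suc n) A = (\<lambda>(xs, a). a # xs) ` (lists_len n A \<times> A)"
    unfolding lists_len_def by (rule lists_length_Suc_eq)
  have inj: "inj_on (\<lambda>(xs, a). a # xs) (lists_len n A \<times> A)"
    by (auto simp: inj_on_def)
  have "sum F (lists_len (Suc n) A) = (\<Sum>(xs, a)\<in>lists_len n A \<times> A. F (a # xs))"
    unfolding eq sum.reindex[OF inj] by (rule sum.cong) auto
  also have "\<dots> = (\<Sum>xs\<in>lists_len n A. \<Sum>a\<in>A. F (a # xs))"
    by (simp add: sum.cartesian_product)
  finally show ?thesis by (rule trans) (rule sum.swap)
qed

lemma sum_lists_len_sum_nth: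
  fixes F :: "'a \<Rightarrow> 'b::comm_semiring_1"
  assumes "finite A"
  shows "(\<Sum>xs\<in>lists_len k A. \<Sum>j<k. F (xs!j)) * of_nat (card A)
    = of_nat k * of_nat (card A ^ k) * sum F A"
proof (induction k)
  case (Suc k)
  have "(\<Sum>xs\<in>lists_len (Suc k) A. \<Sum>j<Suc k. F (xs!j))
      = (\<Sum>a\<in>A. \<Sum>xs\<in>lists_len k A. F a + (\<Sum>j<k. F (xs!j)))"
    unfolding sum_lists_len_Suc[OF assms] sum.lessThan_Suc_shift by simp
  also have "\<dots> = of_nat (card A ^ k) * sum F A
      + of_nat (card A) * (\<Sum>xs\<in>lists_len k A. \<Sum>j<k. F (xs!j))"
    by (simp add: sum.distrib card_lists_len[OF assms] sum_distrib_left sum_distrib_right mult.commute)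
  finally show ?case using Suc by (simp add: algebra_simps)
qed simp

text \<open>Variances of independent centred summands add up.\<close>

lemma sum_lists_len_sum_nth_sq:
  fixes Y :: "'a \<Rightarrow> 'b::comm_semiring_1"
  assumes "finite A" "sum Y A = 0"
  shows "(\<Sum>xs\<in>lists_len k A. (\<Sum>j<k. Y (xs!j))^2) * of_nat (card A)
    = of_nat k * of_nat (card A ^ k) * (\<Sum>a\<in>A. (Y a)^2)"
proof (induction k)
  case (Suc k)
  define T where "T xs = (\<Sum>j<k. Y (xs!j))" for xs
  have "(\<Sum>xs\<in>lists_len (Suc k) A. (\<Sum>j<Suc k. Y (xs!j))^2)
      = (\<Sum>a\<in>A. \<Sum>xs\<in>lists_len k A. (Y a)^2 + 2 * Y a * T xs + (T xs)^2)"
    unfolding sum_lists_len_Suc[OF assms(1)] sum.lessThan_Suc_shift T_def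
    by (intro sum.cong refl) (simp add: power2_eq_square algebra_simps mult_2)
  also have "\<dots> = of_nat (card A ^ k) * (\<Sum>a\<in>A. (Y a)^2)
      + 2 * sum Y A * (\<Sum>xs\<in>lists_len k A. T xs)
      + of_nat (card A) * (\<Sum>xs\<in>lists_len k A. (T xs)^2)"
    by (simp add: sum.distrib card_lists_len[OF assms(1)] sum_distrib_left sum_distrib_right
        algebra_simps)
  finally show ?case using Suc assms(2) by (simp add: algebra_simps T_def)
qed simp

lemma card_gt_mult_le_sum:
  fixes f :: "'a \<Rightarrow> 'b::{ordered_comm_monoid_add, semiring_1}"
  assumes "finite A" "\<And>x. x \<in> A \<Longrightarrow> 0 \<le> f x"
  shows "of_nat (card {x\<in>A. t < f x}) * t \<le> sum f A"
proof -
  have "of_nat (card {x\<in>A. t < f x}) * t = (\<Sum>x\<in>{x\<in>A. t < f x}. t)" by simp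
  also have "\<dots> \<le> (\<Sum>x\<in>{x\<in>A. t < f x}. f x)" by (intro sum_mono) auto
  also have "\<dots> \<le> sum f A" using assms by (intro sum_mono2) auto
  finally show ?thesis .
qed

lemma card_filter_conj3_ge:
  assumes "finite A"
  shows "real (card A) - card {x\<in>A. \<not> P x} - card {x\<in>A. \<not> Q x} - card {x\<in>A. \<not> R x}
    \<le> card {x\<in>A. P x \<and> Q x \<and> R x}"
proof -
  let ?B = "{x\<in>A. \<not> P x} \<union> {x\<in>A. \<not> Q x} \<union> {x\<in>A. \<not> R x}"
  have "card {x\<in>A. P x \<and> Q x \<and> R x} = card (A - ?B)"
    by (rule arg_cong[where f = card]) blast
  moreover have "card A - card ?B \<le> card (A - ?B)"
    by (rule diff_card_le_card_Diff) (use assms in auto)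
  moreover have "card ?B \<le> card {x\<in>A. \<not> P x} + card {x\<in>A. \<not> Q x} + card {x\<in>A. \<not> R x}"
    by (meson card_Un_le add_right_mono order_trans)
  ultimately have "card A \<le> card {x\<in>A. P x \<and> Q x \<and> R x}
      + card {x\<in>A. \<not> P x} + card {x\<in>A. \<not> Q x} + card {x\<in>A. \<not> R x}"
    by linarith
  then have "real (card A) \<le> real (card {x\<in>A. P x \<and> Q x \<and> R x}
      + card {x\<in>A. \<not> P x} + card {x\<in>A. \<not> Q x} + card {x\<in>A. \<not> R x})"
    by (simp only: of_nat_le_iff)
  then show ?thesis by simp
qed

section \<open>Rademacher sign vectors\<close>

abbreviation signs :: "nat \<Rightarrow> real list set" where
  "signs n \<equiv> lists_len n {1, -1}"

definition list_inner :: "nat \<Rightarrow> real list \<Rightarrow> (nat \<Rightarrow> real) \<Rightarrow> real" where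
  "list_inner n s v = (\<Sum>i<n. s!i * v i)"

lemma finite_signs [simp]: "finite (signs n)"
  by (rule finite_lists_len) simp

lemma card_signs: "card (signs n) = 2 ^ n"
  by (simp add: card_lists_len numeral_2_eq_2)

lemma signs_nonempty: "signs n \<noteq> {}"
proof -
  have "replicate n 1 \<in> signs n" unfolding lists_len_def by auto
  then show ?thesis by blast
qed

lemma nth_signs_sq: "s \<in> signs n \<Longrightarrow> i < n \<Longrightarrow> (s!i)^2 = 1"
  unfolding lists_len_def using nth_mem by fastforce

lemma sum_signs_Suc:
  "sum F (signs (Suc n)) = (\<Sum>s\<in>signs n. F (1 # s)) + (\<Sum>s\<in>signs n. F ((-1) # s))"
  by (simp add: sum_lists_len_Suc)

lemma list_inner_Cons: "list_inner (Suc n) (a # s) u = a * u 0 + list_inner n s (\<lambda>i. u (Suc i))"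
  unfolding list_inner_def sum.lessThan_Suc_shift by simp

lemma list_inner_scale: "list_inner n s (\<lambda>i. c * v i) = c * list_inner n s v"
  unfolding list_inner_def by (simp add: sum_distrib_left algebra_simps)

lemma sum_signs_list_inner_mult:
  "(\<Sum>s\<in>signs n. list_inner n s u * list_inner n s v) = 2^n * (\<Sum>i<n. u i * v i)"
proof (induction n arbitrary: u v)
  case (Suc n)
  let ?u = "\<lambda>i. u (Suc i)" and ?v = "\<lambda>i. v (Suc i)"
  have "(\<Sum>s\<in>signs (Suc n). list_inner (Suc n) s u * list_inner (Suc n) s v)
      = (\<Sum>s\<in>signs n. 2 * (u 0 * v 0) + 2 * (list_inner n s ?u * list_inner n s ?v))"
    unfolding sum_signs_Suc list_inner_Cons sum.distrib[symmetric]
    by (rule sum.cong) (auto simp: algebra_simps)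
  also have "\<dots> = 2 * 2^n * (u 0 * v 0) + 2 * (2^n * (\<Sum>i<n. ?u i * ?v i))"
    by (simp add: sum.distrib sum_distrib_left[symmetric] Suc card_signs)
  also have "\<dots> = 2^Suc n * (\<Sum>i<Suc n. u i * v i)"
    unfolding sum.lessThan_Suc_shift by (simp add: algebra_simps)
  finally show ?case .
qed (simp add: list_inner_def)

lemma sum_signs_list_inner_sq:
  "(\<Sum>s\<in>signs n. (list_inner n s u)^2) = 2^n * (\<Sum>i<n. (u i)^2)"
  using sum_signs_list_inner_mult[of n u u] by (simp add: power2_eq_square)

lemma sum_signs_list_inner_sq_mult_sq_le:
  "(\<Sum>s\<in>signs n. (list_inner n s u)^2 * (list_inner n s v)^2)
    \<le> 2^n * ((\<Sum>i<n. (u i)^2) * (\<Sum>i<n. (v i)^2) + 2 * (\<Sum>i<n. u i * v i)^2)"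
proof (induction n arbitrary: u v)
  case (Suc n)
  let ?u = "\<lambda>i. u (Suc i)" and ?v = "\<lambda>i. v (Suc i)"
  define a where "a = u 0"
  define b where "b = v 0"
  define U where "U = (\<Sum>i<n. (?u i)^2)"
  define V where "V = (\<Sum>i<n. (?v i)^2)"
  define W where "W = (\<Sum>i<n. ?u i * ?v i)"
  have "(\<Sum>s\<in>signs (Suc n). (list_inner (Suc n) s u)^2 * (list_inner (Suc n) s v)^2) =
      (\<Sum>s\<in>signs n. 2 * (a^2 * b^2) + 2 * a^2 * (list_inner n s ?v)^2
        + 2 * b^2 * (list_inner n s ?u)^2 + 2 * ((list_inner n s ?u)^2 * (list_inner n s ?v)^2)
        + 8 * a * b * (list_inner n s ?u * list_inner n s ?v))"
    unfolding sum_signs_Suc list_inner_Cons sum.distrib[symmetric] a_def b_def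
    by (rule sum.cong) (auto simp: algebra_simps power2_eq_square)
  also have "\<dots> = 2 * 2^n * (a^2 * b^2) + 2 * a^2 * (2^n * V) + 2 * b^2 * (2^n * U)
      + 2 * (\<Sum>s\<in>signs n. (list_inner n s ?u)^2 * (list_inner n s ?v)^2) + 8 * a * b * (2^n * W)"
    by (simp add: sum.distrib sum_distrib_left[symmetric] sum_signs_list_inner_mult
        sum_signs_list_inner_sq card_signs U_def V_def W_def)
  also have "\<dots> \<le> 2 * 2^n * (a^2 * b^2) + 2 * a^2 * (2^n * V) + 2 * b^2 * (2^n * U)
      + 2 * (2^n * (U * V + 2 * W^2)) + 8 * a * b * (2^n * W)"
    using Suc[of ?u ?v] by (simp add: U_def V_def W_def power2_eq_square)
  also have "\<dots> \<le> 2^Suc n * ((\<Sum>i<Suc n. (u i)^2) * (\<Sum>i<Suc n. (v i)^2)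
      + 2 * (\<Sum>i<Suc n. u i * v i)^2)"
  proof -
    have sums: "(\<Sum>i<Suc n. (u i)^2) = a^2 + U" "(\<Sum>i<Suc n. (v i)^2) = b^2 + V"
      "(\<Sum>i<Suc n. u i * v i) = a * b + W"
      unfolding sum.lessThan_Suc_shift a_def b_def U_def V_def W_def by simp_all
    have "2^Suc n * ((a^2 + U) * (b^2 + V) + 2 * (a * b + W)^2)
        - (2 * 2^n * (a^2 * b^2) + 2 * a^2 * (2^n * V) + 2 * b^2 * (2^n * U)
          + 2 * (2^n * (U * V + 2 * W^2)) + 8 * a * b * (2^n * W))
        = 2^Suc n * (2 * (a * b)^2)"
      by (simp add: algebra_simps power2_eq_square)
    moreover have "2^Suc n * (2 * (a * b)^2) \<ge> (0::real)" by simp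
    ultimately show ?thesis unfolding sums by linarith
  qed
  finally show ?case .
qed (simp add: list_inner_def)

lemma sum_signs_abs_list_inner_le:
  assumes "(\<Sum>i<n. (v i)^2) \<le> 1"
  shows "(\<Sum>s\<in>signs n. \<bar>list_inner n s v\<bar>) \<le> 2^n"
proof -
  have "(\<Sum>s\<in>signs n. \<bar>list_inner n s v\<bar>) \<le> (\<Sum>s\<in>signs n. (1 + (list_inner n s v)^2) / 2)"
  proof (rule sum_mono)
    fix s
    have "0 \<le> (\<bar>list_inner n s v\<bar> - 1)^2" by simp
    then show "\<bar>list_inner n s v\<bar> \<le> (1 + (list_inner n s v)^2) / 2"
      by (simp add: power2_eq_square algebra_simps)
  qed
  also have "\<dots> = (2^n + 2^n * (\<Sum>i<n. (v i)^2)) / 2"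
    by (simp add: sum.distrib sum_divide_distrib[symmetric] sum_signs_list_inner_sq card_signs)
  also have "\<dots> \<le> 2^n" using assms by simp
  finally show ?thesis .
qed

lemma exp_plus_exp_minus_le: "exp x + exp (-x) \<le> 2 * exp ((x::real)^2 / 2)"
proof -
  have nonneg: "exp y + exp (-y) \<le> 2 * exp (y^2 / 2)" if "y \<ge> 0" for y :: real
  proof -
    have "- (2*y) * (1/2) + ln (1 + (1/2) * (exp (2*y) - 1)) \<le> (2*y)^2 / 8"
      by (rule Hoeffdings_lemma_aux) (use that in auto)
    then have "ln (1 + (1/2) * (exp (2*y) - 1)) \<le> y + y^2 / 2"
      by (simp add: power2_eq_square)
    moreover have "1 + (1/2) * (exp (2*y) - 1) > 0"
      by (simp add: algebra_simps add_pos_pos)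
    ultimately have "1 + (1/2) * (exp (2*y) - 1) \<le> exp (y + y^2 / 2)"
      by (metis exp_le_cancel_iff exp_ln)
    then have "(exp y * exp y + 1) / 2 \<le> exp y * exp (y^2 / 2)"
      by (simp add: exp_add[symmetric] algebra_simps)
    then have "exp y + 1 / exp y \<le> 2 * exp (y^2 / 2)"
      by (simp add: field_simps)
    then show ?thesis by (simp add: exp_minus inverse_eq_divide)
  qed
  show ?thesis
    using nonneg[of x] nonneg[of "-x"] by (cases "x \<ge> 0") (auto simp: add.commute)
qed

lemma sum_signs_exp_list_inner_le:
  "(\<Sum>s\<in>signs n. exp (list_inner n s u)) \<le> 2^n * exp ((\<Sum>i<n. (u i)^2) / 2)"
proof (induction n arbitrary: u)
  case (Suc n)
  let ?u = "\<lambda>i. u (Suc i)"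
  have "(\<Sum>s\<in>signs (Suc n). exp (list_inner (Suc n) s u))
      = (\<Sum>s\<in>signs n. exp (u 0) * exp (list_inner n s ?u))
        + (\<Sum>s\<in>signs n. exp (- u 0) * exp (list_inner n s ?u))"
    unfolding sum_signs_Suc list_inner_Cons by (simp add: exp_add[symmetric])
  also have "\<dots> = (exp (u 0) + exp (- u 0)) * (\<Sum>s\<in>signs n. exp (list_inner n s ?u))"
    by (simp add: sum_distrib_left[symmetric] algebra_simps)
  also have "\<dots> \<le> (2 * exp ((u 0)^2 / 2)) * (2^n * exp ((\<Sum>i<n. (?u i)^2) / 2))"
    by (intro mult_mono exp_plus_exp_minus_le Suc) (auto intro: sum_nonneg)
  also have "\<dots> = 2^Suc n * exp ((\<Sum>i<Suc n. (u i)^2) / 2)"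
    unfolding sum.lessThan_Suc_shift by (simp add: exp_add[symmetric] add_divide_distrib)
  finally show ?case .
qed (simp add: list_inner_def)

lemma card_signs_list_inner_ge_le:
  assumes "(\<Sum>i<n. (\<theta> i)^2) \<le> 1"
  shows "real (card {s\<in>signs n. sqrt n / 2 \<le> list_inner n s \<theta>}) \<le> 2^n * exp (- real n / 8)"
proof -
  define L where "L = sqrt n / 2"
  have L: "L \<ge> 0" "L^2 = n / 4" unfolding L_def by (simp_all add: power_divide)
  have "real (card {s\<in>signs n. L \<le> list_inner n s \<theta>})
      = (\<Sum>s\<in>{s\<in>signs n. L \<le> list_inner n s \<theta>}. 1)" by simp
  also have "\<dots> \<le> (\<Sum>s\<in>{s\<in>signs n. L \<le> list_inner n s \<theta>}. exp (L * (list_inner n s \<theta> - L)))"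
    using L by (intro sum_mono) simp
  also have "\<dots> = (\<Sum>s\<in>{s\<in>signs n. L \<le> list_inner n s \<theta>}.
      exp (- (L^2)) * exp (list_inner n s (\<lambda>i. L * \<theta> i)))"
    by (intro sum.cong) (simp_all add: list_inner_scale exp_add[symmetric] algebra_simps power2_eq_square)
  also have "\<dots> \<le> (\<Sum>s\<in>signs n. exp (- (L^2)) * exp (list_inner n s (\<lambda>i. L * \<theta> i)))"
    by (intro sum_mono2) auto
  also have "\<dots> \<le> exp (- (L^2)) * (2^n * exp ((\<Sum>i<n. (L * \<theta> i)^2) / 2))"
    unfolding sum_distrib_left[symmetric] by (intro mult_left_mono sum_signs_exp_list_inner_le) auto
  also have "\<dots> \<le> exp (- (L^2)) * (2^n * exp (L^2 / 2))"
    using assms L by (auto simp: power_mult_distrib sum_distrib_left[symmetric] mult_left_le)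
  also have "\<dots> = 2^n * exp (- real n / 8)"
    by (simp add: L(2) exp_add[symmetric] algebra_simps)
  finally show ?thesis unfolding L_def .
qed

lemma space_vecs: "space (vecs d) = PiE {..<d} (\<lambda>_. UNIV)"
  unfolding vecs_def by (simp add: space_PiM)

lemma measurable_component_vecs [measurable]: "i < d \<Longrightarrow> (\<lambda>x. x i) \<in> borel_measurable (vecs d)"
  unfolding vecs_def by (rule measurable_component_singleton) auto

lemma measurable_inner_d [measurable]: "(\<lambda>x. inner_d d \<theta> x) \<in> borel_measurable (vecs d)"
  unfolding inner_d_def by measurable

lemma measurable_norm_d [measurable]: "norm_d d \<in> borel_measurable (vecs d)"
  unfolding norm_d_def by measurable

lemma measurable_list_inner [measurable]: "list_inner d s \<in> borel_measurable (vecs d)"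
  unfolding list_inner_def by measurable

lemma norm_d_le_1_iff: "norm_d d x \<le> 1 \<longleftrightarrow> (\<Sum>i<d. (x i)^2) \<le> 1"
  unfolding norm_d_def by (simp add: real_sqrt_le_1_iff)

lemma dists_XD:
  assumes "\<mu> \<in> dists_X d"
  shows "prob_space \<mu>" "sets \<mu> = sets (vecs d)" "AE x in \<mu>. (\<Sum>i<d. (x i)^2) \<le> 1"
proof -
  show ps: "prob_space \<mu>" and sets: "sets \<mu> = sets (vecs d)"
    using assms unfolding dists_X_def by auto
  interpret prob_space \<mu> by (rule ps)
  have "measure \<mu> {x \<in> space (vecs d). norm_d d x \<le> 1} = 1"
    using assms unfolding dists_X_def by (simp add: emeasure_eq_measure)
  from AE_prob_1[OF this] show "AE x in \<mu>. (\<Sum>i<d. (x i)^2) \<le> 1"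
    by (rule AE_mp) (auto intro!: AE_I2 simp: norm_d_le_1_iff)
qed

lemma measurable_vecs_imp_measurable:
  "sets \<mu> = sets (vecs d) \<Longrightarrow> f \<in> borel_measurable (vecs d) \<Longrightarrow> f \<in> borel_measurable \<mu>"
  using measurable_cong_sets[of \<mu> "vecs d" borel borel] by simp

lemma close_set_sets:
  assumes "\<mu> \<in> dists_X d"
  shows "close_set d \<mu> \<theta>s \<Delta> \<in> sets (vecs d)"
proof -
  interpret prob_space \<mu> using dists_XD(1)[OF assms] .
  have pair_sets: "sets (vecs d \<Otimes>\<^sub>M \<mu>) = sets (vecs d \<Otimes>\<^sub>M vecs d)"
    by (rule sets_pair_measure_cong) (auto simp: dists_XD(2)[OF assms])
  have "(\<lambda>(\<theta>, x). ennreal \<bar>inner_d d \<theta> x - inner_d d \<theta>s x\<bar>)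
      \<in> borel_measurable (vecs d \<Otimes>\<^sub>M \<mu>)"
    unfolding measurable_cong_sets[OF pair_sets refl] inner_d_def by measurable
  then have "(\<lambda>\<theta>. \<integral>\<^sup>+ x. ennreal \<bar>inner_d d \<theta> x - inner_d d \<theta>s x\<bar> \<partial>\<mu>) \<in> borel_measurable (vecs d)"
    by (rule borel_measurable_nn_integral)
  from measurable_sets[OF this atMost_borel]
  show ?thesis
    unfolding close_set_def by (simp add: vimage_def Int_def conj_commute)
qed

lemma ennreal_inverse_antimono:
  fixes x y :: ennreal
  assumes "x \<le> y"
  shows "inverse y \<le> inverse x"
proof (cases y rule: ennreal_cases)
  case (real r)
  with assms obtain q where q: "x = ennreal q" "0 \<le> q" "q \<le> r"
    by (metis ennreal_cases ennreal_le_iff ennreal_neq_top top.extremum_uniqueI)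
  show ?thesis
  proof (cases "q = 0")
    case False
    with q real show ?thesis by (auto simp: inverse_ennreal intro!: ennreal_leI le_imp_inverse_le)
  qed (use q in simp)
qed simp

section \<open>The lower bound\<close>

definition sign_vec :: "nat \<Rightarrow> real list \<Rightarrow> (nat \<Rightarrow> real)" where
  "sign_vec d s = restrict (\<lambda>i. s!i / sqrt d) {..<d}"

lemma sign_vec_space: "sign_vec d s \<in> space (vecs d)"
  unfolding sign_vec_def space_vecs by auto

lemma inner_d_sign_vec: "inner_d d \<theta> (sign_vec d s) = list_inner d s \<theta> / sqrt d"
  unfolding inner_d_def list_inner_def sign_vec_def by (simp add: sum_divide_distrib algebra_simps)

lemma sum_sq_sign_vec:
  assumes "s \<in> signs d" "d \<ge> 1"
  shows "(\<Sum>i<d. (sign_vec d s i)^2) = 1"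
proof -
  have "(\<Sum>i<d. (sign_vec d s i)^2) = (\<Sum>i<d. 1 / d)"
    using nth_signs_sq[OF assms(1)] by (intro sum.cong) (auto simp: sign_vec_def power_divide)
  also have "\<dots> = 1" using assms(2) by simp
  finally show ?thesis .
qed

lemma inner_d_sign_vec_self:
  "s \<in> signs d \<Longrightarrow> d \<ge> 1 \<Longrightarrow> inner_d d (sign_vec d s) (sign_vec d s) = 1"
  using sum_sq_sign_vec unfolding inner_d_def by (simp add: power2_eq_square)

lemma norm_d_sign_vec: "s \<in> signs d \<Longrightarrow> d \<ge> 1 \<Longrightarrow> norm_d d (sign_vec d s) = 1"
  unfolding norm_d_def by (simp add: sum_sq_sign_vec)

lemma return_sign_vec_dists_X:
  "s \<in> signs d \<Longrightarrow> d \<ge> 1 \<Longrightarrow> return (vecs d) (sign_vec d s) \<in> dists_X d"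
  unfolding dists_X_def
  using prob_space_return[OF sign_vec_space] norm_d_sign_vec by (simp add: sign_vec_space)

lemma close_set_return_sign_vec_subset:
  assumes "s \<in> signs d" "d \<ge> 1" "\<Delta> \<le> 1/2"
  shows "close_set d (return (vecs d) (sign_vec d s)) (sign_vec d s) \<Delta>
    \<subseteq> {\<theta> \<in> space (vecs d). sqrt d / 2 \<le> list_inner d s \<theta>}"
proof
  fix \<theta> assume \<theta>: "\<theta> \<in> close_set d (return (vecs d) (sign_vec d s)) (sign_vec d s) \<Delta>"
  then have "ennreal \<bar>inner_d d \<theta> (sign_vec d s) - 1\<bar> \<le> ennreal \<Delta>"
    unfolding close_set_def
    by (simp add: nn_integral_return sign_vec_space inner_d_sign_vec_self[OF assms(1,2)])
  then have "ennreal \<bar>list_inner d s \<theta> / sqrt d - 1\<bar> \<le> ennreal \<Delta>"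
    by (simp add: inner_d_sign_vec)
  then have "\<bar>list_inner d s \<theta> / sqrt d - 1\<bar> \<le> 1/2"
    using assms(3) by (auto simp: ennreal_le_iff2)
  then have "1/2 \<le> list_inner d s \<theta> / sqrt d" by linarith
  moreover have "sqrt d > 0" using assms(2) by simp
  ultimately have "sqrt d / 2 \<le> list_inner d s \<theta>"
    by (simp add: field_simps)
  with \<theta> show "\<theta> \<in> {\<theta> \<in> space (vecs d). sqrt d / 2 \<le> list_inner d s \<theta>}"
    unfolding close_set_def by simp
qed

text \<open>Summing the Chernoff bound over all sign vectors and integrating against the prior.\<close>

lemma exists_sign_halfspace_prob_le:
  assumes p: "p \<in> dists_class d (unit_pred d)"
  shows "\<exists>s\<in>signs d. emeasure p {\<theta> \<in> space (vecs d). sqrt d / 2 \<le> list_inner d s \<theta>}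
    \<le> ennreal (exp (- real d / 8))"
proof -
  interpret prob_space p using p unfolding dists_class_def by auto
  have sets_p: "sets p = sets (vecs d)" using p unfolding dists_class_def by auto
  define D where "D s = {\<theta> \<in> space (vecs d). sqrt d / 2 \<le> list_inner d s \<theta>}" for s
  have D_sets: "D s \<in> sets p" for s unfolding sets_p D_def by measurable
  have "measure p {\<theta> \<in> space (vecs d). unit_pred d \<theta>} = 1"
    using p unfolding dists_class_def by (simp add: emeasure_eq_measure)
  then have AE_unit: "AE \<theta> in p. (\<Sum>i<d. (\<theta> i)^2) \<le> 1"
    by (rule AE_prob_1[THEN AE_mp]) (auto intro!: AE_I2 simp: unit_pred_def norm_d_le_1_iff)
  have "(\<Sum>s\<in>signs d. emeasure p (D s)) = (\<integral>\<^sup>+ \<theta>. (\<Sum>s\<in>signs d. indicator (D s) \<theta>) \<partial>p)"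
    using D_sets by (simp add: nn_integral_sum)
  also have "\<dots> \<le> (\<integral>\<^sup>+ \<theta>. ennreal (2^d * exp (- real d / 8)) \<partial>p)"
  proof (rule nn_integral_mono_AE, use AE_unit in \<open>rule AE_mp\<close>, intro AE_I2 impI)
    fix \<theta> assume \<theta>: "\<theta> \<in> space p" "(\<Sum>i<d. (\<theta> i)^2) \<le> 1"
    have "(\<Sum>s\<in>signs d. indicator (D s) \<theta>) = (of_nat (card {s\<in>signs d. \<theta> \<in> D s}) :: ennreal)"
      by (simp add: indicator_def sum.If_cases Int_def)
    also have "\<dots> = ennreal (card {s\<in>signs d. sqrt d / 2 \<le> list_inner d s \<theta>})"
      using \<theta>(1) sets_eq_imp_space_eq[OF sets_p] by (simp add: D_def ennreal_of_nat_eq_real_of_nat)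
    also have "\<dots> \<le> ennreal (2^d * exp (- real d / 8))"
      by (intro ennreal_leI card_signs_list_inner_ge_le \<theta>(2))
    finally show "(\<Sum>s\<in>signs d. indicator (D s) \<theta>) \<le> ennreal (2^d * exp (- real d / 8))" .
  qed
  finally have "(\<Sum>s\<in>signs d. prob (D s)) \<le> (\<Sum>s\<in>signs d. exp (- real d / 8))"
    by (simp add: emeasure_eq_measure emeasure_space_1 prob_space sum_ennreal card_signs ennreal_le_iff)
  then obtain s where "s \<in> signs d" "prob (D s) \<le> exp (- real d / 8)"
    using sum_strict_mono[of "signs d"] signs_nonempty by (metis finite_signs not_le)
  then show ?thesis unfolding D_def by (auto simp: emeasure_eq_measure)
qed

lemma N_frac_ge_exp:
  assumes "d \<ge> 1" "\<Delta> \<le> 1/2"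
  shows "ennreal (exp (real d / 8)) \<le> N_frac d (unit_pred d) (unit_pred d) \<Delta>"
  unfolding N_frac_def
proof (rule INF_greatest)
  fix p assume p: "p \<in> dists_class d (unit_pred d)"
  then have sets_p: "sets p = sets (vecs d)" unfolding dists_class_def by auto
  from p obtain s where s: "s \<in> signs d"
    and small: "emeasure p {\<theta> \<in> space (vecs d). sqrt d / 2 \<le> list_inner d s \<theta>}
      \<le> ennreal (exp (- real d / 8))"
    by (blast dest: exists_sign_halfspace_prob_le)
  let ?\<mu> = "return (vecs d) (sign_vec d s)"
  have "emeasure p (close_set d ?\<mu> (sign_vec d s) \<Delta>)
      \<le> emeasure p {\<theta> \<in> space (vecs d). sqrt d / 2 \<le> list_inner d s \<theta>}"
    by (rule emeasure_mono[OF close_set_return_sign_vec_subset[OF s assms]]) (unfold sets_p, measurable)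
  also note small
  finally have "inverse (ennreal (exp (- real d / 8)))
      \<le> inverse (emeasure p (close_set d ?\<mu> (sign_vec d s) \<Delta>))"
    by (rule ennreal_inverse_antimono)
  then have "ennreal (exp (real d / 8)) \<le> inverse (emeasure p (close_set d ?\<mu> (sign_vec d s) \<Delta>))"
    by (simp add: inverse_ennreal exp_minus[symmetric])
  also have "\<dots> \<le> (SUP (\<mu>, \<theta>s) \<in> dists_X d \<times> {\<theta> \<in> space (vecs d). unit_pred d \<theta>}.
      inverse (emeasure p (close_set d \<mu> \<theta>s \<Delta>)))"
    using return_sign_vec_dists_X[OF s assms(1)] sign_vec_space norm_d_sign_vec[OF s assms(1)]
    by (intro SUP_upper2[where i="(?\<mu>, sign_vec d s)"]) (auto simp: unit_pred_def)
  finally show "ennreal (exp (real d / 8)) \<le> \<dots>" .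
qed

section \<open>Maurey sparsification\<close>

definition rank_one_err :: "nat \<Rightarrow> (nat \<Rightarrow> real) \<Rightarrow> (nat \<Rightarrow> real) \<Rightarrow> real list \<Rightarrow> real" where
  "rank_one_err d \<theta>s x g = list_inner d g \<theta>s * list_inner d g x - inner_d d \<theta>s x"

lemma sum_signs_rank_one_err: "(\<Sum>g\<in>signs d. rank_one_err d \<theta>s x g) = 0"
  unfolding rank_one_err_def
  by (simp add: sum_subtractf sum_signs_list_inner_mult card_signs inner_d_def)

lemma sum_signs_rank_one_err_sq_le:
  assumes "(\<Sum>i<d. (\<theta>s i)^2) \<le> 1" "(\<Sum>i<d. (x i)^2) \<le> 1"
  shows "(\<Sum>g\<in>signs d. (rank_one_err d \<theta>s x g)^2) \<le> 2 * 2^d"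
proof -
  define c where "c = inner_d d \<theta>s x"
  define P where "P = (\<Sum>i<d. (\<theta>s i)^2) * (\<Sum>i<d. (x i)^2)"
  have P: "P \<le> 1" unfolding P_def using assms by (intro mult_le_one) (auto intro: sum_nonneg)
  have c: "c^2 \<le> P" unfolding c_def P_def inner_d_def by (rule Cauchy_Schwarz_ineq_sum)
  have "(\<Sum>g\<in>signs d. (rank_one_err d \<theta>s x g)^2)
      = (\<Sum>g\<in>signs d. (list_inner d g \<theta>s)^2 * (list_inner d g x)^2
          - 2 * c * (list_inner d g \<theta>s * list_inner d g x) + c^2)"
    unfolding rank_one_err_def c_def by (intro sum.cong refl) (simp add: power2_eq_square algebra_simps)
  also have "\<dots> = (\<Sum>g\<in>signs d. (list_inner d g \<theta>s)^2 * (list_inner d g x)^2) - 2^d * c^2"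
    by (simp add: sum.distrib sum_subtractf sum_distrib_left[symmetric] sum_signs_list_inner_mult
        card_signs c_def inner_d_def power2_eq_square)
  also have "\<dots> \<le> 2^d * (P + 2 * c^2) - 2^d * c^2"
    using sum_signs_list_inner_sq_mult_sq_le[of d \<theta>s x] by (simp add: P_def c_def inner_d_def)
  also have "\<dots> = 2^d * (P + c^2)"
    by (simp add: algebra_simps)
  also have "\<dots> \<le> 2^d * 2"
    using P c by (intro mult_left_mono) auto
  finally show ?thesis by simp
qed

lemma sum_signs_tuples_sum_nth:
  fixes F :: "real list \<Rightarrow> real"
  shows "(\<Sum>gs\<in>lists_len k (signs d). \<Sum>j<k. F (gs!j)) * 2^d = real k * (2^d)^k * (\<Sum>g\<in>signs d. F g)"
  using sum_lists_len_sum_nth[OF finite_signs[of d], where k = k and F = F]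
  by (simp add: card_signs power_mult)

lemma sum_signs_tuples_sum_list_inner_sq_le:
  assumes "(\<Sum>i<d. (\<theta> i)^2) \<le> 1"
  shows "(\<Sum>gs\<in>lists_len k (signs d). \<Sum>j<k. (list_inner d (gs!j) \<theta>)^2) \<le> real k * (2^d)^k"
proof -
  have "(\<Sum>gs\<in>lists_len k (signs d). \<Sum>j<k. (list_inner d (gs!j) \<theta>)^2) * 2^d
      = real k * (2^d)^k * (\<Sum>g\<in>signs d. (list_inner d g \<theta>)^2)"
    by (rule sum_signs_tuples_sum_nth)
  also have "\<dots> \<le> real k * (2^d)^k * 2^d"
    using assms by (intro mult_left_mono) (auto simp: sum_signs_list_inner_sq)
  finally show ?thesis by simp
qed

lemma sum_signs_tuples_sum_abs_list_inner_le:
  assumes "(\<Sum>i<d. (x i)^2) \<le> 1"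
  shows "(\<Sum>gs\<in>lists_len k (signs d). \<Sum>j<k. \<bar>list_inner d (gs!j) x\<bar>) \<le> real k * (2^d)^k"
proof -
  have "(\<Sum>gs\<in>lists_len k (signs d). \<Sum>j<k. \<bar>list_inner d (gs!j) x\<bar>) * 2^d
      = real k * (2^d)^k * (\<Sum>g\<in>signs d. \<bar>list_inner d g x\<bar>)"
    by (rule sum_signs_tuples_sum_nth)
  also have "\<dots> \<le> real k * (2^d)^k * 2^d"
    by (intro mult_left_mono sum_signs_abs_list_inner_le assms) auto
  finally show ?thesis by simp
qed

text \<open>From the second moment by AM-GM, \<open>|t| \<le> (\<eta> + t\<^sup>2/\<eta>)/2\<close>.\<close>

lemma sum_signs_tuples_abs_mean_rank_one_err_le:
  fixes \<eta> :: real
  assumes "(\<Sum>i<d. (\<theta>s i)^2) \<le> 1" "(\<Sum>i<d. (x i)^2) \<le> 1"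
    and k: "k \<ge> 1" and \<eta>: "\<eta> > 0" "k * \<eta>^2 \<ge> 2"
  shows "(\<Sum>gs\<in>lists_len k (signs d). \<bar>(\<Sum>j<k. rank_one_err d \<theta>s x (gs!j)) / k\<bar>) \<le> (2^d)^k * \<eta>"
proof -
  define C :: real where "C = (2^d)^k"
  define T where "T gs = (\<Sum>j<k. rank_one_err d \<theta>s x (gs!j))" for gs
  have "(\<Sum>gs\<in>lists_len k (signs d). (T gs)^2) * 2^d
      = real k * C * (\<Sum>g\<in>signs d. (rank_one_err d \<theta>s x g)^2)"
    using sum_lists_len_sum_nth_sq[OF finite_signs[of d] sum_signs_rank_one_err[of d \<theta>s x], of k]
    unfolding T_def C_def by (simp add: card_signs power_mult)
  also have "\<dots> \<le> real k * C * (2 * 2^d)"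
    using sum_signs_rank_one_err_sq_le[OF assms(1,2)] unfolding C_def by (intro mult_left_mono) auto
  finally have sq: "(\<Sum>gs\<in>lists_len k (signs d). (T gs)^2) \<le> 2 * k * C" by simp
  have amgm: "\<bar>t\<bar> \<le> (\<eta> + t^2 / \<eta>) / 2" for t :: real
  proof -
    have "0 \<le> (\<bar>t\<bar> - \<eta>)^2" by simp
    then show ?thesis using \<eta> by (simp add: field_simps power2_eq_square)
  qed
  have "(\<Sum>gs\<in>lists_len k (signs d). \<bar>T gs / k\<bar>)
      \<le> (\<Sum>gs\<in>lists_len k (signs d). (\<eta> + (T gs / k)^2 / \<eta>) / 2)"
    by (intro sum_mono amgm)
  also have "\<dots> = (C * \<eta> + (\<Sum>gs\<in>lists_len k (signs d). (T gs)^2) / (k^2 * \<eta>)) / 2"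
    by (simp add: sum.distrib sum_divide_distrib[symmetric] card_lists_len card_signs C_def power_divide)
  also have "\<dots> \<le> (C * \<eta> + (2 * k * C) / (k^2 * \<eta>)) / 2"
    using sq k \<eta> by (intro divide_right_mono add_left_mono) auto
  also have "\<dots> \<le> C * \<eta>"
  proof -
    have "(2 * k * C) / (k^2 * \<eta>) = C * (2 / (k * \<eta>))"
      using k \<eta> by (simp add: field_simps power2_eq_square)
    also have "\<dots> \<le> C * \<eta>"
      using k \<eta> unfolding C_def by (intro mult_left_mono) (auto simp: field_simps power2_eq_square)
    finally show ?thesis by simp
  qed
  finally show ?thesis unfolding T_def C_def .
qed

lemma sum_nn_integral_le_AE_sum:
  assumes "prob_space \<mu>" "finite A"
    and "\<And>a. a \<in> A \<Longrightarrow> f a \<in> borel_measurable \<mu>" "\<And>a x. 0 \<le> f a x"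
    and "AE x in \<mu>. (\<Sum>a\<in>A. f a x) \<le> c"
  shows "(\<Sum>a\<in>A. \<integral>\<^sup>+ x. ennreal (f a x) \<partial>\<mu>) \<le> ennreal c"
proof -
  interpret prob_space \<mu> by fact
  have "(\<Sum>a\<in>A. \<integral>\<^sup>+ x. ennreal (f a x) \<partial>\<mu>) = (\<integral>\<^sup>+ x. ennreal (\<Sum>a\<in>A. f a x) \<partial>\<mu>)"
    using assms(2-4) by (simp add: nn_integral_sum[symmetric] sum_ennreal)
  also have "\<dots> \<le> (\<integral>\<^sup>+ x. ennreal c \<partial>\<mu>)"
    using assms(5) by (intro nn_integral_mono_AE) (auto elim!: AE_mp intro!: ennreal_leI)
  finally show ?thesis by (simp add: emeasure_space_1)
qed

definition sketch_error :: "nat \<Rightarrow> (nat \<Rightarrow> real) measure \<Rightarrow> (nat \<Rightarrow> real) \<Rightarrow> nat \<Rightarrow> real list list \<Rightarrow> ennreal" where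
  "sketch_error d \<mu> \<theta>s k gs = (\<integral>\<^sup>+ x. ennreal \<bar>(\<Sum>j<k. rank_one_err d \<theta>s x (gs!j)) / k\<bar> \<partial>\<mu>)"

definition rounding_error :: "nat \<Rightarrow> (nat \<Rightarrow> real) measure \<Rightarrow> real \<Rightarrow> nat \<Rightarrow> real list list \<Rightarrow> ennreal" where
  "rounding_error d \<mu> \<delta> k gs = (\<integral>\<^sup>+ x. ennreal (\<delta> / k * (\<Sum>j<k. \<bar>list_inner d (gs!j) x\<bar>)) \<partial>\<mu>)"

lemma sum_sketch_error_le:
  fixes \<eta> :: real
  assumes \<mu>: "\<mu> \<in> dists_X d" and "(\<Sum>i<d. (\<theta>s i)^2) \<le> 1"
    and "k \<ge> 1" "\<eta> > 0" "k * \<eta>^2 \<ge> 2"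
  shows "(\<Sum>gs\<in>lists_len k (signs d). sketch_error d \<mu> \<theta>s k gs) \<le> ennreal ((2^d)^k * \<eta>)"
  unfolding sketch_error_def
proof (rule sum_nn_integral_le_AE_sum)
  show "(\<lambda>x. \<bar>(\<Sum>j<k. rank_one_err d \<theta>s x (gs!j)) / k\<bar>) \<in> borel_measurable \<mu>" for gs
    by (rule measurable_vecs_imp_measurable[OF dists_XD(2)[OF \<mu>]]) (unfold rank_one_err_def, measurable)
  show "AE x in \<mu>. (\<Sum>gs\<in>lists_len k (signs d). \<bar>(\<Sum>j<k. rank_one_err d \<theta>s x (gs!j)) / k\<bar>)
      \<le> (2^d)^k * \<eta>"
    using dists_XD(3)[OF \<mu>]
    by (rule AE_mp) (intro AE_I2 impI sum_signs_tuples_abs_mean_rank_one_err_le assms(2-))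
qed (use dists_XD(1)[OF \<mu>] in \<open>auto intro: finite_lists_len\<close>)

lemma sum_rounding_error_le:
  assumes \<mu>: "\<mu> \<in> dists_X d" and "k \<ge> 1" "\<delta> \<ge> 0"
  shows "(\<Sum>gs\<in>lists_len k (signs d). rounding_error d \<mu> \<delta> k gs) \<le> ennreal ((2^d)^k * \<delta>)"
  unfolding rounding_error_def
proof (rule sum_nn_integral_le_AE_sum)
  show "(\<lambda>x. \<delta> / k * (\<Sum>j<k. \<bar>list_inner d (gs!j) x\<bar>)) \<in> borel_measurable \<mu>" for gs
    by (rule measurable_vecs_imp_measurable[OF dists_XD(2)[OF \<mu>]]) measurable
  show "AE x in \<mu>. (\<Sum>gs\<in>lists_len k (signs d). \<delta> / k * (\<Sum>j<k. \<bar>list_inner d (gs!j) x\<bar>))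
      \<le> (2^d)^k * \<delta>"
    using dists_XD(3)[OF \<mu>]
  proof (rule AE_mp, intro AE_I2 impI)
    fix x :: "nat \<Rightarrow> real" assume "(\<Sum>i<d. (x i)^2) \<le> 1"
    then have "\<delta> / k * (\<Sum>gs\<in>lists_len k (signs d). \<Sum>j<k. \<bar>list_inner d (gs!j) x\<bar>)
        \<le> \<delta> / k * (real k * (2^d)^k)"
      using assms by (intro mult_left_mono sum_signs_tuples_sum_abs_list_inner_le) auto
    then show "(\<Sum>gs\<in>lists_len k (signs d). \<delta> / k * (\<Sum>j<k. \<bar>list_inner d (gs!j) x\<bar>))
        \<le> (2^d)^k * \<delta>"
      using assms by (simp add: sum_distrib_left mult.commute)
  qed
qed (use assms dists_XD(1)[OF \<mu>] in \<open>auto intro!: finite_lists_len sum_nonneg\<close>)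

definition sign_comb :: "nat \<Rightarrow> real \<Rightarrow> nat \<Rightarrow> real list list \<times> int list \<Rightarrow> (nat \<Rightarrow> real)" where
  "sign_comb d \<delta> k \<omega> = restrict (\<lambda>i. \<delta> / k * (\<Sum>j<k. of_int (snd \<omega> ! j) * fst \<omega> ! j ! i)) {..<d}"

definition round_coeffs :: "nat \<Rightarrow> (nat \<Rightarrow> real) \<Rightarrow> real \<Rightarrow> real list list \<Rightarrow> int list" where
  "round_coeffs d \<theta>s \<delta> gs = map (\<lambda>g. round (list_inner d g \<theta>s / \<delta>)) gs"

lemma sign_comb_space: "sign_comb d \<delta> k \<omega> \<in> space (vecs d)"
  unfolding sign_comb_def space_vecs by auto

lemma inner_d_sign_comb:
  "inner_d d (sign_comb d \<delta> k \<omega>) x = \<delta> / k * (\<Sum>j<k. of_int (snd \<omega> ! j) * list_inner d (fst \<omega> ! j) x)"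
  unfolding inner_d_def sign_comb_def list_inner_def
  by (simp add: sum_distrib_left sum_distrib_right algebra_simps) (rule sum.swap)

lemma abs_mult_round_divide_sub_le:
  assumes "\<delta> > 0"
  shows "\<bar>\<delta> * of_int (round (a / \<delta>)) - a\<bar> \<le> (\<delta>::real)"
proof -
  have "\<bar>\<delta> * of_int (round (a / \<delta>)) - a\<bar> = \<delta> * \<bar>of_int (round (a / \<delta>)) - a / \<delta>\<bar>"
    using assms by (simp add: abs_mult field_simps flip: abs_of_pos)
  also have "\<dots> \<le> \<delta> * (1/2)" using assms of_int_round_abs_le[of "a / \<delta>"] by (intro mult_left_mono) auto
  finally show ?thesis using assms by simp
qed

lemma abs_inner_sign_comb_round_sub_le:
  assumes k: "k \<ge> 1" and \<delta>: "\<delta> > 0" and gs: "length gs = k"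
  shows "\<bar>inner_d d (sign_comb d \<delta> k (gs, round_coeffs d \<theta>s \<delta> gs)) x - inner_d d \<theta>s x\<bar>
    \<le> \<bar>(\<Sum>j<k. rank_one_err d \<theta>s x (gs!j)) / k\<bar> + \<delta> / k * (\<Sum>j<k. \<bar>list_inner d (gs!j) x\<bar>)"
proof -
  define a where "a j = list_inner d (gs!j) \<theta>s" for j
  define b where "b j = list_inner d (gs!j) x" for j
  define r where "r j = (of_int (round (a j / \<delta>)) :: real)" for j
  have "inner_d d (sign_comb d \<delta> k (gs, round_coeffs d \<theta>s \<delta> gs)) x - inner_d d \<theta>s x
      = (\<Sum>j<k. rank_one_err d \<theta>s x (gs!j)) / k + (\<Sum>j<k. (\<delta> * r j - a j) * b j) / k"
    using gs k unfolding inner_d_sign_comb rank_one_err_def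
    by (simp add: round_coeffs_def r_def a_def b_def field_simps sum_subtractf sum_distrib_left
        sum_divide_distrib)
  also have "\<bar>\<dots>\<bar> \<le> \<bar>(\<Sum>j<k. rank_one_err d \<theta>s x (gs!j)) / k\<bar> + \<bar>(\<Sum>j<k. (\<delta> * r j - a j) * b j) / k\<bar>"
    by (rule abs_triangle_ineq)
  also have "\<bar>(\<Sum>j<k. (\<delta> * r j - a j) * b j) / k\<bar> \<le> \<delta> / k * (\<Sum>j<k. \<bar>b j\<bar>)"
  proof -
    have "\<bar>\<Sum>j<k. (\<delta> * r j - a j) * b j\<bar> \<le> (\<Sum>j<k. \<bar>\<delta> * r j - a j\<bar> * \<bar>b j\<bar>)"
      by (rule order_trans[OF sum_abs]) (simp add: abs_mult)
    also have "\<dots> \<le> (\<Sum>j<k. \<delta> * \<bar>b j\<bar>)"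
      unfolding r_def by (intro sum_mono mult_right_mono abs_mult_round_divide_sub_le[OF \<delta>]) auto
    finally show ?thesis using k by (simp add: sum_distrib_left[symmetric] field_simps)
  qed
  finally show ?thesis unfolding b_def by simp
qed

lemma sign_comb_round_coeffs_in_close_set:
  assumes \<mu>: "\<mu> \<in> dists_X d" and "k \<ge> 1" "\<delta> > 0" "length gs = k"
    and err: "sketch_error d \<mu> \<theta>s k gs + rounding_error d \<mu> \<delta> k gs \<le> ennreal \<Delta>"
  shows "sign_comb d \<delta> k (gs, round_coeffs d \<theta>s \<delta> gs) \<in> close_set d \<mu> \<theta>s \<Delta>"
proof -
  have sets: "sets \<mu> = sets (vecs d)" by (rule dists_XD(2)[OF \<mu>])
  have "(\<integral>\<^sup>+ x. ennreal \<bar>inner_d d (sign_comb d \<delta> k (gs, round_coeffs d \<theta>s \<delta> gs)) x - inner_d d \<theta>s x\<bar> \<partial>\<mu>)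
      \<le> (\<integral>\<^sup>+ x. ennreal \<bar>(\<Sum>j<k. rank_one_err d \<theta>s x (gs!j)) / k\<bar>
          + ennreal (\<delta> / k * (\<Sum>j<k. \<bar>list_inner d (gs!j) x\<bar>)) \<partial>\<mu>)"
  proof (rule nn_integral_mono)
    fix x
    have "ennreal \<bar>inner_d d (sign_comb d \<delta> k (gs, round_coeffs d \<theta>s \<delta> gs)) x - inner_d d \<theta>s x\<bar>
        \<le> ennreal (\<bar>(\<Sum>j<k. rank_one_err d \<theta>s x (gs!j)) / k\<bar>
          + \<delta> / k * (\<Sum>j<k. \<bar>list_inner d (gs!j) x\<bar>))"
      using assms(2-4) by (intro ennreal_leI abs_inner_sign_comb_round_sub_le)
    also have "\<dots> = ennreal \<bar>(\<Sum>j<k. rank_one_err d \<theta>s x (gs!j)) / k\<bar>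
        + ennreal (\<delta> / k * (\<Sum>j<k. \<bar>list_inner d (gs!j) x\<bar>))"
      using assms(3) by (intro ennreal_plus) (auto intro: sum_nonneg)
    finally show "ennreal \<bar>inner_d d (sign_comb d \<delta> k (gs, round_coeffs d \<theta>s \<delta> gs)) x - inner_d d \<theta>s x\<bar>
        \<le> \<dots>" .
  qed
  also have "\<dots> = sketch_error d \<mu> \<theta>s k gs + rounding_error d \<mu> \<delta> k gs"
    unfolding sketch_error_def rounding_error_def
    by (intro nn_integral_add; rule measurable_vecs_imp_measurable[OF sets])
      (unfold rank_one_err_def, measurable)+
  finally show ?thesis
    using err unfolding close_set_def by (simp add: sign_comb_space)
qed

section \<open>The upper bound\<close>

text \<open>\<open>k (\<Delta>/8)\<^sup>2 \<ge> 3\<close>, enough for the sketch error to be at most \<open>\<Delta>/8\<close> on average.\<close>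

definition maurey_terms :: "real \<Rightarrow> nat" where
  "maurey_terms \<Delta> = nat \<lceil>192 / \<Delta>^2\<rceil>"

definition maurey_coeff_bound :: "real \<Rightarrow> nat" where
  "maurey_coeff_bound \<Delta> = nat \<lceil>16 * sqrt (maurey_terms \<Delta>) / \<Delta>\<rceil>"

definition maurey_codes :: "nat \<Rightarrow> real \<Rightarrow> (real list list \<times> int list) set" where
  "maurey_codes d \<Delta> = lists_len (maurey_terms \<Delta>) (signs d)
    \<times> lists_len (maurey_terms \<Delta>) {- int (maurey_coeff_bound \<Delta>) .. int (maurey_coeff_bound \<Delta>)}"

definition maurey_prior :: "nat \<Rightarrow> real \<Rightarrow> (nat \<Rightarrow> real) measure" where
  "maurey_prior d \<Delta> = distr (measure_pmf (pmf_of_set (maurey_codes d \<Delta>))) (vecs d)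
    (sign_comb d (\<Delta>/8) (maurey_terms \<Delta>))"

lemma maurey_terms_ge: "192 / \<Delta>^2 \<le> real (maurey_terms \<Delta>)"
  unfolding maurey_terms_def by linarith

lemma maurey_terms_pos:
  assumes "0 < \<Delta>"
  shows "1 \<le> maurey_terms \<Delta>"
proof -
  have "0 < 192 / \<Delta>^2" using assms by simp
  then have "0 < real (maurey_terms \<Delta>)" using maurey_terms_ge[of \<Delta>] by linarith
  then show ?thesis by simp
qed

lemma finite_maurey_codes: "finite (maurey_codes d \<Delta>)"
  unfolding maurey_codes_def by (intro finite_cartesian_product finite_lists_len) auto

lemma card_maurey_codes:
  "card (maurey_codes d \<Delta>) = (2^d)^maurey_terms \<Delta> * (2 * maurey_coeff_bound \<Delta> + 1)^maurey_terms \<Delta>"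
proof -
  have "card {- int (maurey_coeff_bound \<Delta>) .. int (maurey_coeff_bound \<Delta>)} = 2 * maurey_coeff_bound \<Delta> + 1"
    by simp
  then show ?thesis
    unfolding maurey_codes_def card_cartesian_product by (simp add: card_lists_len card_signs)
qed

lemma maurey_codes_nonempty: "maurey_codes d \<Delta> \<noteq> {}"
  using card_maurey_codes[of d \<Delta>] by auto

lemma maurey_prior_dists_class: "maurey_prior d \<Delta> \<in> dists_class d (\<lambda>_. True)"
proof -
  have ps: "prob_space (maurey_prior d \<Delta>)"
    unfolding maurey_prior_def
    by (rule prob_space.prob_space_distr) (auto simp: prob_space_measure_pmf sign_comb_space)
  then have "emeasure (maurey_prior d \<Delta>) (space (vecs d)) = 1"
    using prob_space.emeasure_space_1[OF ps] by (simp add: maurey_prior_def)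
  with ps show ?thesis
    unfolding dists_class_def by (simp add: maurey_prior_def)
qed

lemma emeasure_maurey_prior:
  assumes "A \<in> sets (vecs d)"
  shows "emeasure (maurey_prior d \<Delta>) A = ennreal (real (card {\<omega>\<in>maurey_codes d \<Delta>.
    sign_comb d (\<Delta>/8) (maurey_terms \<Delta>) \<omega> \<in> A}) / real (card (maurey_codes d \<Delta>)))"
proof -
  have "sign_comb d (\<Delta>/8) (maurey_terms \<Delta>) \<in> measure_pmf (pmf_of_set (maurey_codes d \<Delta>)) \<rightarrow>\<^sub>M vecs d"
    by (simp add: sign_comb_space)
  then show ?thesis
    unfolding maurey_prior_def using assms maurey_codes_nonempty finite_maurey_codes
    by (simp add: emeasure_distr emeasure_pmf_of_set vimage_def Int_def conj_commute)
qed

lemma round_mem_int_interval: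
  assumes "\<bar>t\<bar> \<le> real N"
  shows "round t \<in> {- int N .. int N}"
proof -
  have "round (- real N) \<le> round t" "round t \<le> round (real N)"
    using assms by (intro round_mono; linarith)+
  moreover have "round (- real N) = - int N"
    by (metis of_int_minus of_int_of_nat_eq round_of_int)
  ultimately show ?thesis by simp
qed

lemma round_coeffs_in_grid:
  assumes "0 < \<Delta>" "length gs = maurey_terms \<Delta>"
    and sq: "(\<Sum>j<maurey_terms \<Delta>. (list_inner d (gs!j) \<theta>s)^2) \<le> 4 * real (maurey_terms \<Delta>)"
  shows "round_coeffs d \<theta>s (\<Delta>/8) gs \<in> lists_len (maurey_terms \<Delta>)
    {- int (maurey_coeff_bound \<Delta>) .. int (maurey_coeff_bound \<Delta>)}"
proof -
  let ?k = "maurey_terms \<Delta>" and ?N = "maurey_coeff_bound \<Delta>"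
  have "round (list_inner d g \<theta>s / (\<Delta>/8)) \<in> {- int ?N .. int ?N}" if "g \<in> set gs" for g
  proof -
    obtain j where j: "j < ?k" "g = gs!j" using \<open>g \<in> set gs\<close> assms(2) by (metis in_set_conv_nth)
    have "(list_inner d g \<theta>s)^2 \<le> 4 * real ?k"
      using sq member_le_sum[of j "{..<?k}" "\<lambda>j. (list_inner d (gs!j) \<theta>s)^2"] j by auto
    then have "\<bar>list_inner d g \<theta>s\<bar> \<le> 2 * sqrt ?k"
      using real_sqrt_le_mono by (fastforce simp: real_sqrt_mult)
    then have "8 * \<bar>list_inner d g \<theta>s\<bar> / \<Delta> \<le> 16 * sqrt ?k / \<Delta>"
      using assms(1) by (simp add: divide_right_mono)
    also have "\<dots> \<le> real ?N"
      unfolding maurey_coeff_bound_def by linarith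
    finally have "\<bar>list_inner d g \<theta>s / (\<Delta>/8)\<bar> \<le> real ?N"
      using assms(1) by (simp add: abs_divide field_simps)
    then show ?thesis by (rule round_mem_int_interval)
  qed
  then show ?thesis
    using assms(2) unfolding round_coeffs_def lists_len_def by auto
qed

lemma of_nat_mult_ennreal_le_ennreal:
  assumes "of_nat n * ennreal t \<le> ennreal s" "0 < t" "0 \<le> s"
  shows "real n * t \<le> s"
  using assms
  by (auto simp: ennreal_of_nat_eq_real_of_nat ennreal_mult''[symmetric] ennreal_le_iff2)

text \<open>Markov's inequality discards at most a quarter of all sign tuples for each of the three
  requirements.\<close>

lemma card_good_sign_tuples_ge:
  assumes \<mu>: "\<mu> \<in> dists_X d" and \<Delta>: "0 < \<Delta>" and \<theta>s: "(\<Sum>i<d. (\<theta>s i)^2) \<le> 1"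
  defines "k \<equiv> maurey_terms \<Delta>"
  shows "(2^d)^k / 4 \<le> real (card {gs\<in>lists_len k (signs d).
    (\<Sum>j<k. (list_inner d (gs!j) \<theta>s)^2) \<le> 4 * real k \<and> sketch_error d \<mu> \<theta>s k gs \<le> ennreal (\<Delta>/2)
    \<and> rounding_error d \<mu> (\<Delta>/8) k gs \<le> ennreal (\<Delta>/2)})"
proof -
  let ?G = "lists_len k (signs d)"
  define C :: real where "C = (2^d)^k"
  have C: "0 \<le> C" unfolding C_def by simp
  have k: "1 \<le> k" unfolding k_def by (rule maurey_terms_pos[OF \<Delta>])
  have finG: "finite ?G" by (simp add: finite_lists_len)
  have "real (card {gs\<in>?G. 4 * real k < (\<Sum>j<k. (list_inner d (gs!j) \<theta>s)^2)}) * (4 * real k)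
      \<le> (\<Sum>gs\<in>?G. \<Sum>j<k. (list_inner d (gs!j) \<theta>s)^2)"
    by (intro card_gt_mult_le_sum finG sum_nonneg) auto
  also have "\<dots> \<le> real k * C" unfolding C_def by (rule sum_signs_tuples_sum_list_inner_sq_le[OF \<theta>s])
  finally have bad1: "real (card {gs\<in>?G. \<not> (\<Sum>j<k. (list_inner d (gs!j) \<theta>s)^2) \<le> 4 * real k}) \<le> C / 4"
    using k by (simp add: not_le field_simps)
  have "of_nat (card {gs\<in>?G. ennreal (\<Delta>/2) < sketch_error d \<mu> \<theta>s k gs}) * ennreal (\<Delta>/2)
      \<le> (\<Sum>gs\<in>?G. sketch_error d \<mu> \<theta>s k gs)"
    by (intro card_gt_mult_le_sum finG) auto
  also have "\<dots> \<le> ennreal (C * (\<Delta>/8))"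
    unfolding C_def
  proof (rule sum_sketch_error_le[OF \<mu> \<theta>s k])
    have "192 / \<Delta>^2 * (\<Delta>/8)^2 \<le> real k * (\<Delta>/8)^2"
      unfolding k_def by (intro mult_right_mono maurey_terms_ge) auto
    then show "2 \<le> real k * (\<Delta>/8)^2" using \<Delta> by (simp add: field_simps power2_eq_square)
  qed (use \<Delta> in simp)
  finally have "real (card {gs\<in>?G. ennreal (\<Delta>/2) < sketch_error d \<mu> \<theta>s k gs}) * (\<Delta>/2) \<le> C * (\<Delta>/8)"
    by (rule of_nat_mult_ennreal_le_ennreal) (use \<Delta> C in auto)
  then have bad2: "real (card {gs\<in>?G. \<not> sketch_error d \<mu> \<theta>s k gs \<le> ennreal (\<Delta>/2)}) \<le> C / 4"
    using \<Delta> by (simp add: not_le field_simps)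
  have "of_nat (card {gs\<in>?G. ennreal (\<Delta>/2) < rounding_error d \<mu> (\<Delta>/8) k gs}) * ennreal (\<Delta>/2)
      \<le> (\<Sum>gs\<in>?G. rounding_error d \<mu> (\<Delta>/8) k gs)"
    by (intro card_gt_mult_le_sum finG) auto
  also have "\<dots> \<le> ennreal (C * (\<Delta>/8))"
    unfolding C_def by (rule sum_rounding_error_le[OF \<mu> k]) (use \<Delta> in simp)
  finally have "real (card {gs\<in>?G. ennreal (\<Delta>/2) < rounding_error d \<mu> (\<Delta>/8) k gs}) * (\<Delta>/2) \<le> C * (\<Delta>/8)"
    by (rule of_nat_mult_ennreal_le_ennreal) (use \<Delta> C in auto)
  then have bad3: "real (card {gs\<in>?G. \<not> rounding_error d \<mu> (\<Delta>/8) k gs \<le> ennreal (\<Delta>/2)}) \<le> C / 4"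
    using \<Delta> by (simp add: not_le field_simps)
  have "real (card ?G) = C" unfolding C_def by (simp add: card_lists_len card_signs)
  then show ?thesis
    using card_filter_conj3_ge[OF finG, where P = "\<lambda>gs. (\<Sum>j<k. (list_inner d (gs!j) \<theta>s)^2) \<le> 4 * real k"
        and Q = "\<lambda>gs. sketch_error d \<mu> \<theta>s k gs \<le> ennreal (\<Delta>/2)"
        and R = "\<lambda>gs. rounding_error d \<mu> (\<Delta>/8) k gs \<le> ennreal (\<Delta>/2)"] bad1 bad2 bad3
    unfolding C_def by linarith
qed

lemma emeasure_maurey_prior_close_set_ge:
  assumes \<mu>: "\<mu> \<in> dists_X d" and \<Delta>: "0 < \<Delta>" and \<theta>s: "norm_d d \<theta>s \<le> 1"
  shows "ennreal (1 / (4 * (2 * real (maurey_coeff_bound \<Delta>) + 1) ^ maurey_terms \<Delta>))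
    \<le> emeasure (maurey_prior d \<Delta>) (close_set d \<mu> \<theta>s \<Delta>)"
proof -
  let ?k = "maurey_terms \<Delta>"
  let ?close = "{\<omega>\<in>maurey_codes d \<Delta>. sign_comb d (\<Delta>/8) ?k \<omega> \<in> close_set d \<mu> \<theta>s \<Delta>}"
  define Good where "Good = {gs\<in>lists_len ?k (signs d).
    (\<Sum>j<?k. (list_inner d (gs!j) \<theta>s)^2) \<le> 4 * real ?k \<and> sketch_error d \<mu> \<theta>s ?k gs \<le> ennreal (\<Delta>/2)
    \<and> rounding_error d \<mu> (\<Delta>/8) ?k gs \<le> ennreal (\<Delta>/2)}"
  define code where "code gs = (gs, round_coeffs d \<theta>s (\<Delta>/8) gs)" for gs
  have "code ` Good \<subseteq> ?close"
  proof (rule image_subsetI)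
    fix gs assume gs: "gs \<in> Good"
    then have len: "length gs = ?k" unfolding Good_def lists_len_def by auto
    have "sketch_error d \<mu> \<theta>s ?k gs + rounding_error d \<mu> (\<Delta>/8) ?k gs \<le> ennreal (\<Delta>/2) + ennreal (\<Delta>/2)"
      using gs unfolding Good_def by (auto intro: add_mono)
    also have "\<dots> = ennreal \<Delta>" using \<Delta> by (simp flip: ennreal_plus)
    finally show "code gs \<in> ?close"
      using gs len \<Delta> maurey_terms_pos[OF \<Delta>] unfolding code_def Good_def maurey_codes_def
      by (auto intro!: round_coeffs_in_grid sign_comb_round_coeffs_in_close_set[OF \<mu>])
  qed
  moreover have "inj_on code Good" unfolding code_def by (rule inj_onI) simp
  ultimately have "card Good \<le> card ?close"
    using finite_maurey_codes by (intro card_inj_on_le) auto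
  moreover have "(2^d)^?k / 4 \<le> real (card Good)"
    unfolding Good_def using card_good_sign_tuples_ge[OF \<mu> \<Delta>] \<theta>s by (simp add: norm_d_le_1_iff)
  ultimately have "(2^d)^?k / 4 / real (card (maurey_codes d \<Delta>))
      \<le> real (card ?close) / real (card (maurey_codes d \<Delta>))"
    by (intro divide_right_mono) auto
  then show ?thesis
    by (simp add: emeasure_maurey_prior close_set_sets[OF \<mu>] card_maurey_codes ennreal_leI
        field_simps)
qed

lemma nat_ceiling_le_add_1: "0 \<le> y \<Longrightarrow> real (nat \<lceil>y\<rceil>) \<le> y + 1"
  by linarith

lemma maurey_codes_bound_le_exp:
  assumes \<Delta>: "0 < \<Delta>" "\<Delta> \<le> 1/1000"
  shows "4 * (2 * real (maurey_coeff_bound \<Delta>) + 1) ^ maurey_terms \<Delta> \<le> exp (600 / \<Delta>^2 * ln (1 / \<Delta>))"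
proof -
  define L where "L = ln (1 / \<Delta>)"
  define k where "k = real (maurey_terms \<Delta>)"
  define M where "M = 2 * real (maurey_coeff_bound \<Delta>) + 1"
  have inv_sq: "1 \<le> 1 / \<Delta>^2"
    using \<Delta> by (simp add: field_simps power_le_one)
  have L4: "ln 4 \<le> L" unfolding L_def using \<Delta> by (subst ln_le_cancel_iff) (auto simp: field_simps)
  have L0: "0 \<le> L" using L4 ln_ge_zero[of 4] by linarith
  have "k \<le> 192 / \<Delta>^2 + 1"
    unfolding k_def maurey_terms_def by (rule nat_ceiling_le_add_1) simp
  then have k: "k \<le> 193 / \<Delta>^2" using inv_sq by simp
  have sqrt_k: "sqrt k \<le> 14 / \<Delta>"
  proof -
    have "193 / \<Delta>^2 \<le> 14^2 / \<Delta>^2" by (intro divide_right_mono) auto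
    then have "sqrt k \<le> sqrt (14^2 / \<Delta>^2)" using k by (intro real_sqrt_le_mono) simp
    then show ?thesis using \<Delta> by (simp add: real_sqrt_divide)
  qed
  have "real (maurey_coeff_bound \<Delta>) \<le> 16 * sqrt k / \<Delta> + 1"
    unfolding maurey_coeff_bound_def k_def by (rule nat_ceiling_le_add_1) (use \<Delta> in simp)
  then have "M \<le> 2 * (16 * sqrt k / \<Delta> + 1) + 1" unfolding M_def by simp
  also have "\<dots> \<le> 2 * (16 * (14 / \<Delta>) / \<Delta> + 1) + 1"
    using sqrt_k \<Delta> by (intro add_right_mono mult_left_mono divide_right_mono) auto
  also have "\<dots> \<le> 451 / \<Delta>^2" using inv_sq by (simp add: power2_eq_square)
  also have "\<dots> \<le> 1 / \<Delta>^3" using \<Delta> by (simp add: field_simps power2_eq_square power3_eq_cube)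
  finally have M: "M \<le> 1 / \<Delta>^3" .
  have M1: "1 \<le> M" unfolding M_def by simp
  have ln_M: "ln M \<le> 3 * L"
  proof -
    have "ln M \<le> ln (1 / \<Delta>^3)" using M M1 \<Delta> by (subst ln_le_cancel_iff) auto
    also have "\<dots> = 3 * L" unfolding L_def using \<Delta> by (simp add: ln_div ln_realpow)
    finally show ?thesis .
  qed
  have "4 * M ^ maurey_terms \<Delta> = exp (ln 4 + k * ln M)"
    using M1 unfolding k_def by (simp add: exp_add exp_of_nat_mult)
  also have "\<dots> \<le> exp (L + (193 / \<Delta>^2) * (3 * L))"
    using L4 k ln_M L0 M1 by (intro exp_mono add_mono mult_mono) (auto simp: k_def)
  also have "\<dots> \<le> exp (600 / \<Delta>^2 * L)"
  proof -
    have "L \<le> L / \<Delta>^2"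
      using inv_sq L0 by (metis mult_left_mono mult.right_neutral times_divide_eq_right)
    moreover have "193 / \<Delta>^2 * (3 * L) = 579 * (L / \<Delta>^2)" "600 / \<Delta>^2 * L = 600 * (L / \<Delta>^2)"
      by simp_all
    ultimately have "L + 193 / \<Delta>^2 * (3 * L) \<le> 600 / \<Delta>^2 * L" using L0 by linarith
    then show ?thesis by simp
  qed
  finally show ?thesis unfolding M_def L_def .
qed

lemma N_frac_le_exp:
  assumes "0 < \<Delta>" "\<Delta> \<le> 1/1000"
  shows "N_frac d (unit_pred d) (\<lambda>_. True) \<Delta> \<le> ennreal (exp (600 / \<Delta>^2 * ln (1 / \<Delta>)))"
proof -
  define M where "M = 4 * (2 * real (maurey_coeff_bound \<Delta>) + 1) ^ maurey_terms \<Delta>"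
  have M: "0 < M" unfolding M_def by simp
  have "N_frac d (unit_pred d) (\<lambda>_. True) \<Delta> \<le> (SUP (\<mu>, \<theta>s) \<in> dists_X d \<times> {\<theta> \<in> space (vecs d). unit_pred d \<theta>}.
      inverse (emeasure (maurey_prior d \<Delta>) (close_set d \<mu> \<theta>s \<Delta>)))"
    unfolding N_frac_def by (rule INF_lower) (rule maurey_prior_dists_class)
  also have "\<dots> \<le> ennreal M"
  proof (rule SUP_least, clarify)
    fix \<mu> \<theta>s assume "\<mu> \<in> dists_X d" "\<theta>s \<in> space (vecs d)" "unit_pred d \<theta>s"
    then have "inverse (emeasure (maurey_prior d \<Delta>) (close_set d \<mu> \<theta>s \<Delta>)) \<le> inverse (ennreal (1 / M))"
      unfolding M_def unit_pred_def using assms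
      by (intro ennreal_inverse_antimono emeasure_maurey_prior_close_set_ge) auto
    then show "inverse (emeasure (maurey_prior d \<Delta>) (close_set d \<mu> \<theta>s \<Delta>)) \<le> ennreal M"
      using M by (simp add: inverse_ennreal)
  qed
  also have "\<dots> \<le> ennreal (exp (600 / \<Delta>^2 * ln (1 / \<Delta>)))"
    unfolding M_def by (intro ennreal_leI maurey_codes_bound_le_exp assms)
  finally show ?thesis .
qed

theorem propositionC5:
  shows "\<exists>c C d0 \<Delta>0 :: real. c > 0 \<and> C > 0 \<and> d0 > 0 \<and> \<Delta>0 > 0 \<and>
    (\<forall>d::nat. real d \<ge> d0 \<longrightarrow> (\<forall>\<Delta>::real. 0 < \<Delta> \<and> \<Delta> \<le> 1/2 \<longrightarrow>
        ennreal (exp (c * real d)) \<le> N_frac d (unit_pred d) (unit_pred d) \<Delta>)) \<and>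
    (\<forall>d::nat. d \<ge> 1 \<longrightarrow> (\<forall>\<Delta>::real. 0 < \<Delta> \<and> \<Delta> \<le> \<Delta>0 \<longrightarrow>
        N_frac d (unit_pred d) (\<lambda>_. True) \<Delta> \<le> ennreal (exp (C / \<Delta>^2 * ln (1 / \<Delta>)))))"
proof (rule exI[of _ "1/8"], rule exI[of _ 600], rule exI[of _ 1], rule exI[of _ "1/1000"],
    intro conjI allI impI)
  fix d :: nat and \<Delta> :: real
  assume "1 \<le> real d" "0 < \<Delta> \<and> \<Delta> \<le> 1/2"
  then show "ennreal (exp (1/8 * real d)) \<le> N_frac d (unit_pred d) (unit_pred d) \<Delta>"
    using N_frac_ge_exp[of d \<Delta>] by (simp add: mult.commute)
next
  fix d :: nat and \<Delta> :: real
  assume "1 \<le> d" "0 < \<Delta> \<and> \<Delta> \<le> 1/1000"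
  then show "N_frac d (unit_pred d) (\<lambda>_. True) \<Delta> \<le> ennreal (exp (600 / \<Delta>^2 * ln (1 / \<Delta>)))"
    using N_frac_le_exp by blast
qed simp_all

end
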